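(* Let $f\in\mathbb Q(x)$ be a rational function with rational coefficients that is defined on $(0,1)$ and satisfies $0<f(p)<1$ for all $p\in(0,1)$. Then there exist an integer $k\ge0$ and integers $0\le d_i\le e_i$ ($i=0,\dots,k$) such that, with $d(p)=\sum_{i=0}^k d_ip^i(1-p)^{k-i}$ and $e(p)=\sum_{i=0}^k e_ip^i(1-p)^{k-i}$, one has $e(p)\neq0$ and $f(p)=d(p)/e(p)$ for all $p\in(0,1)$. *)

theory Defs
  imports "HOL-Analysis.Analysis" "HOL-Computational_Algebra.Polynomial_Factorial"
begin

definition rpoly :: "rat poly \<Rightarrow> real \<Rightarrow> real" where
  "rpoly P x = poly (map_poly of_rat P) x"

end

(* Polya's argument. A polynomial p that is positive on [0, 1] has positive coefficients in the
   basis x^i (1 - x)^(n - i) for every large n: the i-th coefficient divided by (n choose i)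
   differs from p(i/n) by O(1/n). A polynomial that is positive only on (0, 1) becomes positive on
   [0, 1] after splitting off factors x^a (1 - x)^b, and multiplying back by them merely shifts
   the coefficients. After normalising the sign of Q, the polynomials P and Q - P are positive on
   (0, 1) because 0 < P/Q < 1; expanding both in a common degree k gives nonnegative rational
   coefficients c_i, r_i, and clearing denominators turns d_i = c_i and e_i = c_i + r_i into
   integers with 0 <= d_i <= e_i and d(p)/e(p) = P(p)/Q(p). *)

theory Submission
  imports Defs
begin

section \<open>Evaluating rational polynomials at real points\<close>

lemma map_poly_of_rat_add:
  "map_poly (of_rat :: rat \<Rightarrow> 'a::field_char_0) (p + q) = map_poly of_rat p + map_poly of_rat q"
  by (rule poly_eqI) (simp add: coeff_map_poly of_rat_add)

lemma map_poly_of_rat_mult: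
  "map_poly (of_rat :: rat \<Rightarrow> 'a::field_char_0) (p * q) = map_poly of_rat p * map_poly of_rat q"
  by (rule poly_eqI) (simp add: coeff_map_poly coeff_mult of_rat_sum of_rat_mult)

lemma map_poly_of_rat_smult:
  "map_poly (of_rat :: rat \<Rightarrow> 'a::field_char_0) (smult a p) = smult (of_rat a) (map_poly of_rat p)"
  by (rule poly_eqI) (simp add: coeff_map_poly of_rat_mult)

lemma rpoly_0 [simp]: "rpoly 0 x = 0"
  by (simp add: rpoly_def)

lemma rpoly_1 [simp]: "rpoly 1 x = 1"
  by (simp add: rpoly_def)

lemma rpoly_add [simp]: "rpoly (p + q) x = rpoly p x + rpoly q x"
  by (simp add: rpoly_def map_poly_of_rat_add)

lemma rpoly_diff [simp]: "rpoly (p - q) x = rpoly p x - rpoly q x"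
  using rpoly_add[of "p - q" q x] by simp

lemma rpoly_minus [simp]: "rpoly (- p) x = - rpoly p x"
  using rpoly_diff[of 0 p x] by simp

lemma rpoly_mult [simp]: "rpoly (p * q) x = rpoly p x * rpoly q x"
  by (simp add: rpoly_def map_poly_of_rat_mult)

lemma rpoly_smult [simp]: "rpoly (smult a p) x = of_rat a * rpoly p x"
  by (simp add: rpoly_def map_poly_of_rat_smult)

lemma rpoly_power [simp]: "rpoly (p ^ n) x = rpoly p x ^ n"
  by (induction n) simp_all

lemma rpoly_pCons [simp]: "rpoly (pCons a p) x = of_rat a + x * rpoly p x"
  by (simp add: rpoly_def map_poly_pCons)

lemma rpoly_of_rat: "rpoly p (of_rat r) = of_rat (poly p r)"
  by (induction p) (simp_all add: of_rat_add of_rat_mult)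

section \<open>Expansion in the basis x^i (1 - x)^(n - i)\<close>

definition bernstein_sum :: "nat \<Rightarrow> (nat \<Rightarrow> 'a::comm_ring_1) \<Rightarrow> 'a \<Rightarrow> 'a" where
  "bernstein_sum n c x = (\<Sum>i\<le>n. c i * x ^ i * (1 - x) ^ (n - i))"

lemma bernstein_sum_cong:
  "(\<And>i. i \<le> n \<Longrightarrow> c i = d i) \<Longrightarrow> bernstein_sum n c x = bernstein_sum n d x"
  unfolding bernstein_sum_def by (intro sum.cong) auto

lemma bernstein_sum_add:
  "bernstein_sum n (\<lambda>i. c i + d i) x = bernstein_sum n c x + bernstein_sum n d x"
  by (simp add: bernstein_sum_def distrib_right sum.distrib)

lemma bernstein_sum_cmult:
  "bernstein_sum n (\<lambda>i. a * c i) x = a * bernstein_sum n c x"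
  by (simp add: bernstein_sum_def sum_distrib_left mult_ac)

lemma sum_atMost_shift:
  fixes g :: "nat \<Rightarrow> 'a::comm_monoid_add"
  assumes "a + n \<le> N"
  shows "(\<Sum>i\<le>N. if a \<le> i \<and> i \<le> a + n then g (i - a) else 0) = (\<Sum>t\<le>n. g t)"
proof -
  have "(\<Sum>i\<le>N. if a \<le> i \<and> i \<le> a + n then g (i - a) else 0) = (\<Sum>i\<in>{a..a + n}. g (i - a))"
    using assms by (intro sum.mono_neutral_cong_right) auto
  also have "\<dots> = (\<Sum>t\<le>n. g t)"
    by (simp add: sum.atLeastAtMost_shift_0 atLeast0AtMost)
  finally show ?thesis .
qed

lemma bernstein_sum_mult_power:
  "x ^ a * (1 - x) ^ b * bernstein_sum n c x =
     bernstein_sum (a + n + b) (\<lambda>i. if a \<le> i \<and> i \<le> a + n then c (i - a) else 0) x"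
proof -
  have "x ^ a * (1 - x) ^ b * bernstein_sum n c x =
      (\<Sum>t\<le>n. c t * x ^ (a + t) * (1 - x) ^ (a + n + b - (a + t)))"
    unfolding bernstein_sum_def sum_distrib_left
  proof (intro sum.cong refl)
    fix t assume "t \<in> {..n}"
    then have "a + n + b - (a + t) = (n - t) + b" by auto
    then show "x ^ a * (1 - x) ^ b * (c t * x ^ t * (1 - x) ^ (n - t)) =
        c t * x ^ (a + t) * (1 - x) ^ (a + n + b - (a + t))"
      by (simp only: power_add mult_ac)
  qed
  also have "\<dots> = (\<Sum>i\<le>a + n + b. if a \<le> i \<and> i \<le> a + n then
      c (i - a) * x ^ (a + (i - a)) * (1 - x) ^ (a + n + b - (a + (i - a))) else 0)"
    by (rule sum_atMost_shift[symmetric]) simp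
  also have "\<dots> = bernstein_sum (a + n + b) (\<lambda>i. if a \<le> i \<and> i \<le> a + n then c (i - a) else 0) x"
    unfolding bernstein_sum_def by (intro sum.cong refl) auto
  finally show ?thesis .
qed

lemma monomial_eq_bernstein_sum:
  fixes x :: "'a::comm_ring_1"
  assumes "j \<le> n"
  shows "of_nat (n choose j) * x ^ j = bernstein_sum n (\<lambda>i. of_nat (n choose i) * of_nat (i choose j)) x"
proof -
  have "of_nat (n choose j) * x ^ j = of_nat (n choose j) * x ^ j * (x + (1 - x)) ^ (n - j)"
    by simp
  also have "\<dots> = (\<Sum>t\<le>n - j. of_nat (n choose j) * of_nat ((n - j) choose t) *
      x ^ (j + t) * (1 - x) ^ (n - (j + t)))"
    unfolding binomial_ring sum_distrib_left
    by (intro sum.cong refl) (simp add: power_add diff_diff_add mult_ac)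
  also have "\<dots> = (\<Sum>i\<le>n. if j \<le> i \<and> i \<le> j + (n - j) then of_nat (n choose j) *
      of_nat ((n - j) choose (i - j)) * x ^ (j + (i - j)) * (1 - x) ^ (n - (j + (i - j))) else 0)"
    using assms by (intro sum_atMost_shift[symmetric]) simp
  also have "\<dots> = bernstein_sum n (\<lambda>i. of_nat (n choose i) * of_nat (i choose j)) x"
    unfolding bernstein_sum_def
  proof (intro sum.cong refl)
    fix i assume "i \<in> {..n}"
    then show "(if j \<le> i \<and> i \<le> j + (n - j) then of_nat (n choose j) *
        of_nat ((n - j) choose (i - j)) * x ^ (j + (i - j)) * (1 - x) ^ (n - (j + (i - j))) else 0) =
      of_nat (n choose i) * of_nat (i choose j) * x ^ i * (1 - x) ^ (n - i)"
      using choose_mult[of j i n] by (auto simp: binomial_eq_0 simp flip: of_nat_mult)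
  qed
  finally show ?thesis .
qed

text \<open>Only meaningful for \<open>degree p \<le> n\<close>: otherwise some \<open>n choose j\<close> in a denominator vanishes.\<close>

definition bernstein_coeff :: "nat \<Rightarrow> 'a::field_char_0 poly \<Rightarrow> nat \<Rightarrow> 'a" where
  "bernstein_coeff n p i =
     of_nat (n choose i) * (\<Sum>j\<le>degree p. coeff p j * of_nat (i choose j) / of_nat (n choose j))"

lemma poly_eq_bernstein_sum:
  assumes "degree p \<le> n"
  shows "poly p x = bernstein_sum n (bernstein_coeff n p) x"
proof -
  have "poly p x = (\<Sum>j\<le>degree p. coeff p j / of_nat (n choose j) * (of_nat (n choose j) * x ^ j))"
    using assms by (simp add: poly_altdef)
  also have "\<dots> = (\<Sum>j\<le>degree p. bernstein_sum n
      (\<lambda>i. coeff p j / of_nat (n choose j) * (of_nat (n choose i) * of_nat (i choose j))) x)"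
  proof (intro sum.cong refl)
    fix j assume "j \<in> {..degree p}"
    with assms have "j \<le> n" by simp
    then show "coeff p j / of_nat (n choose j) * (of_nat (n choose j) * x ^ j) = bernstein_sum n
        (\<lambda>i. coeff p j / of_nat (n choose j) * (of_nat (n choose i) * of_nat (i choose j))) x"
      by (simp only: bernstein_sum_cmult monomial_eq_bernstein_sum)
  qed
  also have "\<dots> = bernstein_sum n (bernstein_coeff n p) x"
    unfolding bernstein_sum_def bernstein_coeff_def
    by (subst sum.swap) (simp add: sum_distrib_left sum_distrib_right mult_ac)
  finally show ?thesis .
qed

lemma of_rat_bernstein_coeff:
  "of_rat (bernstein_coeff n p i) = bernstein_coeff n (map_poly of_rat p) i"
  by (simp add: bernstein_coeff_def degree_map_poly coeff_map_poly
      of_rat_mult of_rat_sum of_rat_divide)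

section \<open>Positivity of the coefficients\<close>

lemma binomial_ratio_eq_prod:
  assumes "j \<le> n"
  shows "real (i choose j) / real (n choose j) = (\<Prod>l<j. (real i - real l) / (real n - real l))"
proof -
  have binomial_eq: "real (k choose j) = (\<Prod>l<j. real k - real l) / fact j" for k
    using gbinomial_mult_fact[of j "real k"]
    by (simp add: binomial_gbinomial atLeast0LessThan field_simps)
  have "(\<Prod>l<j. real n - real l) \<noteq> 0"
    using assms by (simp add: prod_zero_iff)
  then show ?thesis
    unfolding binomial_eq prod_dividef by simp
qed

lemma binomial_ratio_approx:
  assumes "i \<le> n" "2 * j \<le> n"
  shows "\<bar>real (i choose j) / real (n choose j) - (real i / real n) ^ j\<bar> \<le> 2 * real j ^ 2 / real n"
proof -
  have factor_bounds: "\<bar>(real i - real l) / (real n - real l)\<bar> \<le> 1"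
      "\<bar>(real i - real l) / (real n - real l) - real i / real n\<bar> \<le> 2 * real j / real n"
    if "l < j" for l
  proof -
    have nl: "real n - real l > 0" "2 * real l \<le> real n" using assms that by linarith+
    have "\<bar>real i - real l\<bar> \<le> real n - real l" using assms nl by (simp add: abs_le_iff)
    then show "\<bar>(real i - real l) / (real n - real l)\<bar> \<le> 1" using nl by (simp add: abs_divide)
    have "(real i - real l) / (real n - real l) - real i / real n =
        - (real l * (real n - real i)) / ((real n - real l) * real n)"
      using nl by (simp add: field_simps)
    also have "\<bar>\<dots>\<bar> = real l * (real n - real i) / ((real n - real l) * real n)"
      using nl assms(1) by (simp add: abs_divide abs_mult)
    also have "\<dots> \<le> real l * real n / ((real n - real l) * real n)"
      using nl by (intro divide_right_mono mult_left_mono) auto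
    also have "\<dots> = real l / (real n - real l)" using nl by simp
    also have "\<dots> \<le> real l / (real n / 2)"
      using nl by (intro divide_left_mono) auto
    also have "\<dots> \<le> 2 * real j / real n" using that by (simp add: divide_right_mono)
    finally show "\<bar>(real i - real l) / (real n - real l) - real i / real n\<bar> \<le> 2 * real j / real n" .
  qed
  have "\<bar>real i / real n\<bar> \<le> 1" using assms by (auto simp: divide_le_eq_1)
  have "\<bar>real (i choose j) / real (n choose j) - (real i / real n) ^ j\<bar> =
      \<bar>(\<Prod>l<j. (real i - real l) / (real n - real l)) - (\<Prod>l<j. real i / real n)\<bar>"
    using assms by (simp add: binomial_ratio_eq_prod)
  also have "\<dots> \<le> (\<Sum>l<j. \<bar>(real i - real l) / (real n - real l) - real i / real n\<bar>)"
    by (rule norm_prod_diff[where z = "\<lambda>l. (real i - real l) / (real n - real l)"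
          and w = "\<lambda>_. real i / real n", unfolded real_norm_def])
      (use factor_bounds(1) \<open>\<bar>real i / real n\<bar> \<le> 1\<close> in auto)
  also have "\<dots> \<le> (\<Sum>l<j. 2 * real j / real n)"
    by (intro sum_mono factor_bounds(2)) simp
  also have "\<dots> = 2 * real j ^ 2 / real n"
    by (simp add: power2_eq_square)
  finally show ?thesis .
qed

lemma bernstein_coeff_approx:
  fixes p :: "real poly"
  assumes "2 * degree p \<le> n" "i \<le> n"
  shows "\<bar>bernstein_coeff n p i / real (n choose i) - poly p (real i / real n)\<bar>
    \<le> (\<Sum>j\<le>degree p. \<bar>coeff p j\<bar>) * (2 * real (degree p) ^ 2 / real n)"
proof -
  let ?d = "degree p"
  have "bernstein_coeff n p i / real (n choose i) - poly p (real i / real n) =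
      (\<Sum>j\<le>?d. coeff p j * (real (i choose j) / real (n choose j) - (real i / real n) ^ j))"
    using assms(2) by (simp add: bernstein_coeff_def poly_altdef sum_subtractf algebra_simps)
  also have "\<bar>\<dots>\<bar> \<le> (\<Sum>j\<le>?d. \<bar>coeff p j\<bar> * (2 * real ?d ^ 2 / real n))"
  proof (rule order_trans[OF sum_abs sum_mono])
    fix j assume "j \<in> {..?d}"
    then have "2 * j \<le> n" "real j ^ 2 \<le> real ?d ^ 2" using assms(1) by auto
    then have "\<bar>real (i choose j) / real (n choose j) - (real i / real n) ^ j\<bar> \<le> 2 * real ?d ^ 2 / real n"
      using binomial_ratio_approx[OF assms(2)] by (meson divide_right_mono mult_left_mono
        of_nat_0_le_iff order_trans zero_le_numeral)
    then show "\<bar>coeff p j * (real (i choose j) / real (n choose j) - (real i / real n) ^ j)\<bar>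
        \<le> \<bar>coeff p j\<bar> * (2 * real ?d ^ 2 / real n)"
      unfolding abs_mult by (rule mult_left_mono) simp
  qed
  finally show ?thesis by (simp only: sum_distrib_right)
qed

lemma eventually_bernstein_coeff_pos:
  fixes p :: "real poly"
  assumes pos: "\<And>x. 0 \<le> x \<Longrightarrow> x \<le> 1 \<Longrightarrow> poly p x > 0"
  shows "\<forall>\<^sub>F n in sequentially. \<forall>i\<le>n. bernstein_coeff n p i > 0"
proof -
  have "\<exists>x0\<in>{0..1}. \<forall>x\<in>{0..1}. poly p x0 \<le> poly p x"
    by (rule continuous_attains_inf[OF compact_Icc]) (auto intro: continuous_intros)
  then obtain x0 where "x0 \<in> {0..1}" and min: "\<And>x. x \<in> {0..1} \<Longrightarrow> poly p x0 \<le> poly p x"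
    by blast
  with pos have "poly p x0 > 0" by simp
  define C where "C = (\<Sum>j\<le>degree p. \<bar>coeff p j\<bar>) * (2 * real (degree p) ^ 2)"
  have "\<forall>\<^sub>F n in sequentially. C / real n < poly p x0"
    using order_tendstoD(2)[OF lim_const_over_n \<open>poly p x0 > 0\<close>] .
  moreover have "\<forall>\<^sub>F n in sequentially. 2 * degree p \<le> n"
    by (rule eventually_ge_at_top)
  ultimately show ?thesis
  proof eventually_elim
    case (elim n)
    show ?case
    proof (intro allI impI)
      fix i assume "i \<le> n"
      have "\<bar>bernstein_coeff n p i / real (n choose i) - poly p (real i / real n)\<bar> \<le> C / real n"
        using bernstein_coeff_approx[OF elim(2) \<open>i \<le> n\<close>] by (simp only: C_def times_divide_eq_right)
      also have "\<dots> < poly p x0"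
        by (rule elim(1))
      finally have "poly p (real i / real n) - bernstein_coeff n p i / real (n choose i) < poly p x0"
        by (simp only: abs_less_iff minus_diff_eq)
      moreover have "poly p x0 \<le> poly p (real i / real n)"
        using \<open>i \<le> n\<close> by (intro min) (auto simp: divide_le_eq_1)
      ultimately have "bernstein_coeff n p i / real (n choose i) > 0"
        by linarith
      then show "bernstein_coeff n p i > 0"
        using \<open>i \<le> n\<close> by (simp add: zero_less_divide_iff)
    qed
  qed
qed

lemma poly_pos_closed_interval:
  fixes p :: "real poly"
  assumes "a < b" "\<And>x. a < x \<Longrightarrow> x < b \<Longrightarrow> poly p x > 0"
    and "poly p a \<noteq> 0" "poly p b \<noteq> 0" "a \<le> x" "x \<le> b"
  shows "poly p x > 0"
proof -
  have "continuous_on {a..b} (poly p)"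
    by (intro continuous_intros)
  then have "poly p x \<ge> 0"
    using continuous_ge_on_closure[of "{a<..<b}" "poly p" x 0] assms by (simp add: less_imp_le)
  then show ?thesis
    using assms by (cases "x = a \<or> x = b") auto
qed

lemma poly_sign_on_rootfree_interval:
  fixes p :: "real poly"
  assumes "\<And>x. a < x \<Longrightarrow> x < b \<Longrightarrow> poly p x \<noteq> 0"
  shows "(\<forall>x\<in>{a<..<b}. poly p x > 0) \<or> (\<forall>x\<in>{a<..<b}. poly p x < 0)"
proof (rule ccontr)
  assume "\<not> ?thesis"
  then obtain x y where xy: "x \<in> {a<..<b}" "y \<in> {a<..<b}" "poly p x < 0" "poly p y > 0"
    using assms by (auto simp: not_less order.order_iff_strict)
  then have "x \<noteq> y" by auto
  with xy have "min x y < max x y" "poly p (min x y) * poly p (max x y) < 0"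
    by (auto simp: min_def max_def mult_neg_pos mult_pos_neg)
  then obtain z where z: "min x y < z" "z < max x y" "poly p z = 0"
    using poly_IVT by blast
  with xy have "a < z" "z < b"
    by (simp_all add: min_less_iff_disj less_max_iff_disj) linarith+
  with z(3) assms show False by blast
qed

lemma poly_factor_roots_0_1:
  fixes p :: "'a::idom poly"
  assumes "p \<noteq> 0"
  obtains a b q where "p = [:0, 1:] ^ a * [:1, -1:] ^ b * q" "poly q 0 \<noteq> 0" "poly q 1 \<noteq> 0"
proof -
  obtain g where g: "p = [:0, 1:] ^ order 0 p * g" "poly g 0 \<noteq> 0"
    using order_decomp[OF assms, of 0] by (auto simp: poly_eq_0_iff_dvd)
  with assms have "g \<noteq> 0" by auto
  obtain h where h: "g = [:-1, 1:] ^ order 1 g * h" "poly h 1 \<noteq> 0"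
    using order_decomp[OF \<open>g \<noteq> 0\<close>, of 1] by (auto simp: poly_eq_0_iff_dvd)
  define b where "b = order 1 g"
  define q where "q = (- 1) ^ b * h"
  have "[:-1, 1:] ^ b * h = (- [:1, -1 :: 'a:]) ^ b * h"
    by simp
  also have "\<dots> = [:1, -1:] ^ b * q"
    by (subst power_minus) (simp only: q_def mult_ac)
  finally have "[:-1, 1:] ^ b * h = [:1, -1:] ^ b * q" .
  with g(1) h(1) have "p = [:0, 1:] ^ order 0 p * [:1, -1:] ^ b * q"
    by (simp only: b_def mult.assoc)
  moreover have "poly h 0 \<noteq> 0"
    using g(2) by (subst (asm) h(1)) simp
  then have "poly q 0 \<noteq> 0" "poly q 1 \<noteq> 0"
    using h(2) by (simp_all add: q_def)
  ultimately show ?thesis by (rule that)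
qed

lemma rpoly_pos_split_endpoint_roots:
  fixes p :: "rat poly"
  assumes pos: "\<And>x. 0 < x \<Longrightarrow> x < 1 \<Longrightarrow> rpoly p x > 0"
  obtains a b q where "\<And>x. rpoly p x = x ^ a * (1 - x) ^ b * rpoly q x"
    "\<And>x. 0 \<le> x \<Longrightarrow> x \<le> 1 \<Longrightarrow> rpoly q x > 0"
proof -
  have "p \<noteq> 0"
    using pos[of "1/2"] by auto
  then obtain a b q where p: "p = [:0, 1:] ^ a * [:1, -1:] ^ b * q"
    and q01: "poly q 0 \<noteq> 0" "poly q 1 \<noteq> 0"
    by (rule poly_factor_roots_0_1)
  have rpoly_p: "rpoly p x = x ^ a * (1 - x) ^ b * rpoly q x" for x
    by (simp add: p)
  have "rpoly q x > 0" if "0 < x" "x < 1" for x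
  proof -
    have "x ^ a * (1 - x) ^ b > 0"
      using that by simp
    with pos[OF that] show ?thesis
      unfolding rpoly_p by (rule zero_less_mult_pos)
  qed
  moreover have "rpoly q 0 \<noteq> 0" "rpoly q 1 \<noteq> 0"
    using q01 rpoly_of_rat[of q 0] rpoly_of_rat[of q 1] by simp_all
  ultimately have "rpoly q x > 0" if "0 \<le> x" "x \<le> 1" for x
    using poly_pos_closed_interval[of 0 1 "map_poly of_rat q"] that by (simp add: rpoly_def)
  with rpoly_p show ?thesis
    by (rule that)
qed

lemma eventually_nonneg_bernstein_repr:
  fixes p :: "rat poly"
  assumes "\<And>x. 0 < x \<Longrightarrow> x < 1 \<Longrightarrow> rpoly p x > 0"
  shows "\<forall>\<^sub>F n in sequentially. \<exists>c. (\<forall>i\<le>n. 0 \<le> c i) \<and>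
           (\<forall>x. rpoly p x = bernstein_sum n (\<lambda>i. of_rat (c i)) x)"
proof -
  obtain a b q where rpoly_p: "\<And>x. rpoly p x = x ^ a * (1 - x) ^ b * rpoly q x"
    and q_pos: "\<And>x. 0 \<le> x \<Longrightarrow> x \<le> 1 \<Longrightarrow> rpoly q x > 0"
    using rpoly_pos_split_endpoint_roots[OF assms] by blast
  have "\<forall>\<^sub>F n in sequentially. \<forall>i\<le>n. (0 :: real) < bernstein_coeff n (map_poly of_rat q) i"
    using q_pos by (intro eventually_bernstein_coeff_pos) (simp add: rpoly_def)
  with eventually_ge_at_top[of "degree q"]
  have ev: "\<forall>\<^sub>F n in sequentially. degree q \<le> n \<and> (\<forall>i\<le>n. bernstein_coeff n q i > 0)"
    by eventually_elim (simp flip: of_rat_bernstein_coeff)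
  define R where "R = (\<lambda>n. \<exists>c. (\<forall>i\<le>n. 0 \<le> c i) \<and>
      (\<forall>x. rpoly p x = bernstein_sum n (\<lambda>i. of_rat (c i)) x))"
  have "\<forall>\<^sub>F n in sequentially. R (n + (a + b))"
    using ev
  proof eventually_elim
    case (elim n)
    define c where "c i = (if a \<le> i \<and> i \<le> a + n then bernstein_coeff n q (i - a) else 0)" for i
    have "rpoly q x = bernstein_sum n (\<lambda>i. of_rat (bernstein_coeff n q i)) x" for x
      using elim poly_eq_bernstein_sum[of "map_poly of_rat q" n x]
      by (simp add: rpoly_def of_rat_bernstein_coeff degree_map_poly)
    moreover have "(\<lambda>i. real_of_rat (c i)) =
        (\<lambda>i. if a \<le> i \<and> i \<le> a + n then of_rat (bernstein_coeff n q (i - a)) else 0)"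
      by (simp add: c_def fun_eq_iff)
    ultimately have "rpoly p x = bernstein_sum (a + n + b) (\<lambda>i. of_rat (c i)) x" for x
      by (simp add: rpoly_p bernstein_sum_mult_power)
    moreover have "\<forall>i\<le>a + n + b. 0 \<le> c i"
      using elim by (auto simp: c_def less_imp_le)
    moreover have "n + (a + b) = a + n + b"
      by simp
    ultimately show ?case
      unfolding R_def by metis
  qed
  then show ?thesis
    using eventually_sequentially_seg[of R "a + b"] unfolding R_def by blast
qed

section \<open>Clearing denominators\<close>

lemma rat_common_denominator:
  fixes f :: "'a \<Rightarrow> rat"
  assumes "finite A"
  obtains D :: int and g :: "'a \<Rightarrow> int" where "D > 0" "\<And>x. x \<in> A \<Longrightarrow> of_int (g x) = of_int D * f x"
proof
  define num where "num x = fst (quotient_of (f x))" for x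
  define den where "den x = snd (quotient_of (f x))" for x
  define D where "D = (\<Prod>x\<in>A. den x)"
  have den_pos: "den x > 0" for x
    unfolding den_def by (simp add: quotient_of_denom_pos')
  then show "D > 0"
    unfolding D_def by (intro prod_pos) simp
  fix x assume "x \<in> A"
  have "f x = of_int (num x) / of_int (den x)"
    by (rule quotient_of_div) (simp add: num_def den_def)
  then have "of_int (den x) * f x = of_int (num x)"
    using den_pos[of x] by simp
  moreover have "D = den x * (\<Prod>y\<in>A - {x}. den y)"
    unfolding D_def using assms \<open>x \<in> A\<close> by (rule prod.remove)
  ultimately show "of_int (num x * (\<Prod>y\<in>A - {x}. den y)) = of_int D * f x"
    by (simp add: mult_ac)
qed

lemma bernstein_sum_of_int_eq_scaled:
  assumes "\<And>i. i \<le> k \<Longrightarrow> rat_of_int (n i) = of_int D * c i"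
  shows "bernstein_sum k (\<lambda>i. real_of_int (n i)) x = of_int D * bernstein_sum k (\<lambda>i. of_rat (c i)) x"
  unfolding bernstein_sum_cmult[symmetric]
proof (rule bernstein_sum_cong)
  fix i assume "i \<le> k"
  from arg_cong[OF assms[OF this], of of_rat]
  show "real_of_int (n i) = of_int D * of_rat (c i)"
    by (simp add: of_rat_mult)
qed

lemma integer_bernstein_repr_pair:
  fixes P Q :: "rat poly"
  assumes "\<And>x. 0 < x \<Longrightarrow> x < 1 \<Longrightarrow> 0 < rpoly P x \<and> rpoly P x < rpoly Q x"
  obtains D :: int and k :: nat and d e :: "nat \<Rightarrow> int"
  where "D > 0" "\<And>i. i \<le> k \<Longrightarrow> 0 \<le> d i \<and> d i \<le> e i"
    "\<And>x. bernstein_sum k (\<lambda>i. of_int (d i)) x = of_int D * rpoly P x"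
    "\<And>x. bernstein_sum k (\<lambda>i. of_int (e i)) x = of_int D * rpoly Q x"
proof -
  have "\<forall>\<^sub>F k in sequentially.
      (\<exists>c. (\<forall>i\<le>k. 0 \<le> c i) \<and> (\<forall>x. rpoly P x = bernstein_sum k (\<lambda>i. of_rat (c i)) x)) \<and>
      (\<exists>c. (\<forall>i\<le>k. 0 \<le> c i) \<and> (\<forall>x. rpoly (Q - P) x = bernstein_sum k (\<lambda>i. of_rat (c i)) x))"
    using assms by (intro eventually_conj eventually_nonneg_bernstein_repr) auto
  then obtain k cP cR where cP: "\<forall>i\<le>k. 0 \<le> cP i" "\<And>x. rpoly P x = bernstein_sum k (\<lambda>i. of_rat (cP i)) x"
    and cR: "\<forall>i\<le>k. 0 \<le> cR i" "\<And>x. rpoly (Q - P) x = bernstein_sum k (\<lambda>i. of_rat (cR i)) x"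
    using eventually_happens'[OF sequentially_bot] by blast
  obtain D1 nP where D1: "D1 > 0" and nP: "\<And>i. i \<le> k \<Longrightarrow> of_int (nP i) = of_int D1 * cP i"
    by (rule rat_common_denominator[of "{..k}" cP]) auto
  obtain D2 nR where D2: "D2 > 0" and nR: "\<And>i. i \<le> k \<Longrightarrow> of_int (nR i) = of_int D2 * cR i"
    by (rule rat_common_denominator[of "{..k}" cR]) auto
  have "0 \<le> rat_of_int (nP i)" "0 \<le> rat_of_int (nR i)" if "i \<le> k" for i
    using nP[of i] nR[of i] cP(1) cR(1) D1 D2 that by simp_all
  then have "0 \<le> D2 * nP i \<and> D2 * nP i \<le> D2 * nP i + D1 * nR i" if "i \<le> k" for i
    using D1 D2 that by simp
  moreover have bsP: "bernstein_sum k (\<lambda>i. of_int (nP i)) x = of_int D1 * rpoly P x"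
    and bsR: "bernstein_sum k (\<lambda>i. of_int (nR i)) x = of_int D2 * rpoly (Q - P) x" for x
    by (simp_all only: cP(2) cR(2) bernstein_sum_of_int_eq_scaled[OF nP] bernstein_sum_of_int_eq_scaled[OF nR])
  ultimately show ?thesis
    using that[of "D1 * D2" k "\<lambda>i. D2 * nP i" "\<lambda>i. D2 * nP i + D1 * nR i"] D1 D2
    by (simp add: bernstein_sum_add bernstein_sum_cmult bsP bsR algebra_simps)
qed

lemma rpoly_sign_normalization:
  assumes "\<And>x. 0 < x \<Longrightarrow> x < 1 \<Longrightarrow> rpoly Q x \<noteq> 0"
  obtains s :: rat where "s \<noteq> 0" "\<And>x. 0 < x \<Longrightarrow> x < 1 \<Longrightarrow> 0 < rpoly (smult s Q) x"
proof -
  have "(\<forall>x\<in>{0<..<1}. rpoly Q x > 0) \<or> (\<forall>x\<in>{0<..<1}. rpoly Q x < 0)"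
    using poly_sign_on_rootfree_interval[of 0 1 "map_poly of_rat Q"] assms by (simp add: rpoly_def)
  then show ?thesis
    using that[of 1] that[of "- 1"] by (auto simp: of_rat_minus)
qed

theorem lemma2p7:
  fixes P Q :: "rat poly"
  assumes "Q \<noteq> 0" and "coprime P Q"
    and "\<And>p::real. 0 < p \<Longrightarrow> p < 1 \<Longrightarrow> rpoly Q p \<noteq> 0"
    and "\<And>p::real. 0 < p \<Longrightarrow> p < 1 \<Longrightarrow> 0 < rpoly P p / rpoly Q p \<and> rpoly P p / rpoly Q p < 1"
  shows "\<exists>(k::nat) (d::nat \<Rightarrow> int) (e::nat \<Rightarrow> int).
           (\<forall>i\<le>k. 0 \<le> d i \<and> d i \<le> e i) \<and>
           (\<forall>p::real. 0 < p \<and> p < 1 \<longrightarrow>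
              (\<Sum>i\<le>k. of_int (e i) * p ^ i * (1 - p) ^ (k - i)) \<noteq> 0 \<and>
              rpoly P p / rpoly Q p =
                (\<Sum>i\<le>k. of_int (d i) * p ^ i * (1 - p) ^ (k - i)) /
                (\<Sum>i\<le>k. of_int (e i) * p ^ i * (1 - p) ^ (k - i)))"
proof -
  obtain s :: rat where "s \<noteq> 0" and sQ_pos: "\<And>x. 0 < x \<Longrightarrow> x < 1 \<Longrightarrow> 0 < rpoly (smult s Q) x"
    using rpoly_sign_normalization[OF assms(3)] by blast
  have sPQ: "0 < rpoly (smult s P) x \<and> rpoly (smult s P) x < rpoly (smult s Q) x"
    if "0 < x" "x < 1" for x
  proof -
    have "rpoly (smult s P) x / rpoly (smult s Q) x = rpoly P x / rpoly Q x"
      using \<open>s \<noteq> 0\<close> by simp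
    with assms(4)[OF that]
    have "0 < rpoly (smult s P) x / rpoly (smult s Q) x" "rpoly (smult s P) x / rpoly (smult s Q) x < 1"
      by simp_all
    with sQ_pos[OF that] show ?thesis
      by (simp add: zero_less_divide_iff del: rpoly_smult)
  qed
  obtain D k d e where "D > 0" "\<And>i. i \<le> k \<Longrightarrow> 0 \<le> d i \<and> d i \<le> e i"
    and d_sum: "\<And>x. bernstein_sum k (\<lambda>i. of_int (d i)) x = of_int D * rpoly (smult s P) x"
    and e_sum: "\<And>x. bernstein_sum k (\<lambda>i. of_int (e i)) x = of_int D * rpoly (smult s Q) x"
    using integer_bernstein_repr_pair[OF sPQ] by blast
  moreover have "bernstein_sum k (\<lambda>i. of_int (e i)) x \<noteq> 0" and
    "rpoly P x / rpoly Q x = bernstein_sum k (\<lambda>i. of_int (d i)) x / bernstein_sum k (\<lambda>i. of_int (e i)) x"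
    if "0 < x" "x < 1" for x
    using sQ_pos[OF that] \<open>D > 0\<close> \<open>s \<noteq> 0\<close> unfolding d_sum e_sum by auto
  ultimately show ?thesis
    unfolding bernstein_sum_def by blast
qed

end
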